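(* Let $\mathcal{X}\subset\mathbb{R}^d$ be a full-dimensional polytope with vertex set $\mathcal{V}$ and let ${\bm{u}}\in\mathbb{R}^d$. Then every inclusion-wise minimal optimal spanning set of ${\bm{u}}$ has exactly $d+1$ elements, and hence is an affine basis of $\mathcal{X}$.
   Context: For ${\bm{u}}\in\mathbb{R}^d$ write ${\bm{x}}\succeq{\bm{x}}'$ if $\langle{\bm{u}},{\bm{x}}\rangle\ge\langle{\bm{u}},{\bm{x}}'\rangle$. For a finite $B\subseteq\mathcal{X}$ and ${\bm{x}}\in\mathbb{R}^d$ let $B_{\succeq{\bm{x}}}=\{{\bm{x}}'\in B:\langle{\bm{u}},{\bm{x}}'-{\bm{x}}\rangle\ge0\}$. A finite set $B\subseteq\mathcal{X}$ is an optimal spanning set of ${\bm{u}}$ if every vertex ${\bm{x}}\in\mathcal{V}$ lies in the affine hull of $B_{\succeq{\bm{x}}}$. *)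

theory Defs
  imports "HOL-Analysis.Analysis"
begin

definition vertices :: "'a::euclidean_space set \<Rightarrow> 'a set" where
  "vertices X = {x. x extreme_point_of X}"

definition upper_set :: "'a::euclidean_space \<Rightarrow> 'a set \<Rightarrow> 'a \<Rightarrow> 'a set" where
  "upper_set u B x = {x' \<in> B. inner u (x' - x) \<ge> 0}"

definition optimal_spanning_set :: "'a::euclidean_space set \<Rightarrow> 'a \<Rightarrow> 'a set \<Rightarrow> bool" where
  "optimal_spanning_set X u B \<longleftrightarrow> finite B \<and> B \<subseteq> X \<and>
     (\<forall>x \<in> vertices X. x \<in> affine hull (upper_set u B x))"

definition minimal_optimal_spanning_set :: "'a::euclidean_space set \<Rightarrow> 'a \<Rightarrow> 'a set \<Rightarrow> bool" where
  "minimal_optimal_spanning_set X u B \<longleftrightarrow> optimal_spanning_set X u B \<and>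
     (\<forall>B'. B' \<subset> B \<longrightarrow> \<not> optimal_spanning_set X u B')"

end

theory Submission
  imports Defs
begin

text \<open>
  Take an affine dependency among points of \<open>B\<close> and, among the points with nonzero
  coefficient, one point \<open>b\<close> with least value \<open>\<langle>u, b\<rangle>\<close>. Solving the dependency for \<open>b\<close>
  puts it in the affine hull of points \<open>\<succeq> b\<close>, hence \<open>\<succeq> x\<close> for every vertex \<open>x \<preceq> b\<close>;
  so \<open>b\<close> can be dropped from any optimal spanning set. A minimal optimal spanning set is
  therefore affinely independent. It spans every vertex, so by Krein-Milman its affine
  hull is that of the polytope, i.e. all of \<open>\<real>\<^sup>d\<close>, and it has \<open>d + 1\<close> elements.
\<close>

lemma affine_dependent_obtains_point_in_affine_hull_above:
  fixes B :: "'a::real_vector set" and f :: "'a \<Rightarrow> real"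
  assumes "affine_dependent B"
  obtains b where "b \<in> B" "b \<in> affine hull {b' \<in> B - {b}. f b \<le> f b'}"
proof -
  obtain S c where S: "finite S" "S \<subseteq> B" "sum c S = 0" "\<exists>v\<in>S. c v \<noteq> 0"
    "(\<Sum>v\<in>S. c v *\<^sub>R v) = 0"
    using assms unfolding affine_dependent_explicit by blast
  define S' where "S' = {v\<in>S. c v \<noteq> 0}"
  have "finite S'" "S' \<noteq> {}"
    using S(1,4) by (auto simp: S'_def)
  then obtain b where b: "b \<in> S'" and b_min: "\<And>v. v \<in> S' \<Longrightarrow> f b \<le> f v"
    by (metis arg_min_if_finite(1) arg_min_least)
  have cb: "c b \<noteq> 0"
    using b by (simp add: S'_def)
  have "sum c S' = sum c S" "(\<Sum>v\<in>S'. c v *\<^sub>R v) = (\<Sum>v\<in>S. c v *\<^sub>R v)"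
    by (auto intro!: sum.mono_neutral_left simp: S(1) S'_def)
  with S(3,5) have "sum c S' = 0" "(\<Sum>v\<in>S'. c v *\<^sub>R v) = 0"
    by simp_all
  define T where "T = S' - {b}"
  have "finite T"
    using \<open>finite S'\<close> by (simp add: T_def)
  have sum_T: "sum c T = - c b" and vsum_T: "(\<Sum>v\<in>T. c v *\<^sub>R v) = - (c b *\<^sub>R b)"
    using \<open>sum c S' = 0\<close> \<open>(\<Sum>v\<in>S'. c v *\<^sub>R v) = 0\<close> b \<open>finite S'\<close>
    by (simp_all add: T_def sum_diff1)
  define w where "w v = - c v / c b" for v
  have "sum w T = 1"
    using sum_T cb by (simp add: w_def sum_negf flip: sum_divide_distrib)
  moreover have "(\<Sum>v\<in>T. w v *\<^sub>R v) = b"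
  proof -
    have "(\<Sum>v\<in>T. w v *\<^sub>R v) = (- 1 / c b) *\<^sub>R (\<Sum>v\<in>T. c v *\<^sub>R v)"
      by (simp add: w_def scaleR_sum_right)
    also have "\<dots> = b"
      using vsum_T cb by simp
    finally show ?thesis .
  qed
  ultimately have "b \<in> affine hull T"
    using \<open>finite T\<close> by (auto simp: affine_hull_finite)
  moreover have "T \<subseteq> {b' \<in> B - {b}. f b \<le> f b'}"
    using b_min S(2) by (auto simp: T_def S'_def)
  ultimately have "b \<in> affine hull {b' \<in> B - {b}. f b \<le> f b'}"
    using hull_mono by blast
  moreover have "b \<in> B"
    using b S(2) by (auto simp: S'_def)
  ultimately show thesis
    using that by blast
qed

lemma upper_set_antimono:
  assumes "inner u (y - x) \<ge> 0"
  shows "upper_set u B y \<subseteq> upper_set u B x"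
  using assms by (auto simp: upper_set_def inner_diff_right)

lemma optimal_spanning_set_Diff_singleton:
  assumes opt: "optimal_spanning_set X u B"
    and b_span: "b \<in> affine hull (upper_set u (B - {b}) b)"
  shows "optimal_spanning_set X u (B - {b})"
  unfolding optimal_spanning_set_def
proof (intro conjI ballI)
  show "finite (B - {b})" "B - {b} \<subseteq> X"
    using opt by (auto simp: optimal_spanning_set_def)
  fix x
  assume "x \<in> vertices X"
  then have x_span: "x \<in> affine hull (upper_set u B x)"
    using opt by (auto simp: optimal_spanning_set_def)
  show "x \<in> affine hull (upper_set u (B - {b}) x)"
  proof (cases "inner u (b - x) \<ge> 0")
    case True
    then have "b \<in> affine hull (upper_set u (B - {b}) x)"
      using b_span hull_mono[OF upper_set_antimono] by blast
    then have "affine hull (insert b (upper_set u (B - {b}) x)) =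
        affine hull (upper_set u (B - {b}) x)"
      by (rule hull_redundant)
    moreover have "upper_set u B x \<subseteq> insert b (upper_set u (B - {b}) x)"
      by (auto simp: upper_set_def)
    ultimately show ?thesis
      using x_span hull_mono by blast
  next
    case False
    then have "upper_set u B x = upper_set u (B - {b}) x"
      by (auto simp: upper_set_def)
    then show ?thesis
      using x_span by simp
  qed
qed

lemma minimal_optimal_spanning_set_imp_affine_independent:
  assumes "minimal_optimal_spanning_set X u B"
  shows "\<not> affine_dependent B"
proof
  assume "affine_dependent B"
  then obtain b where "b \<in> B" and "b \<in> affine hull {b' \<in> B - {b}. inner u b \<le> inner u b'}"
    by (rule affine_dependent_obtains_point_in_affine_hull_above)
  then have "b \<in> affine hull (upper_set u (B - {b}) b)"
    by (simp add: upper_set_def inner_diff_right)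
  then have "optimal_spanning_set X u (B - {b})"
    using assms optimal_spanning_set_Diff_singleton
    by (auto simp: minimal_optimal_spanning_set_def)
  moreover have "B - {b} \<subset> B"
    using \<open>b \<in> B\<close> by auto
  ultimately show False
    using assms by (auto simp: minimal_optimal_spanning_set_def)
qed

lemma optimal_spanning_set_affine_hull:
  assumes "compact X" "convex X" "optimal_spanning_set X u B"
  shows "affine hull B = affine hull X"
proof
  show "affine hull B \<subseteq> affine hull X"
    using assms(3) hull_mono by (auto simp: optimal_spanning_set_def)
  have "vertices X \<subseteq> affine hull B"
    using assms(3) hull_mono[of "upper_set u B _" B]
    by (force simp: optimal_spanning_set_def upper_set_def)
  then have "affine hull (vertices X) \<subseteq> affine hull B"
    by (metis hull_hull hull_mono)
  moreover have "X = convex hull (vertices X)"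
    using Krein_Milman_Minkowski[OF assms(1,2)] by (simp add: vertices_def)
  ultimately show "affine hull X \<subseteq> affine hull B"
    by (metis affine_hull_convex_hull)
qed

theorem mainTheorem11:
  fixes X :: "'a::euclidean_space set" and u :: 'a and B :: "'a set"
  assumes "polytope X"
    and "aff_dim X = int DIM('a)"
    and "minimal_optimal_spanning_set X u B"
  shows "card B = DIM('a) + 1 \<and> \<not> affine_dependent B \<and> affine hull B = affine hull X"
proof -
  have indep: "\<not> affine_dependent B"
    using assms(3) by (rule minimal_optimal_spanning_set_imp_affine_independent)
  have span: "affine hull B = affine hull X"
    using assms(3) unfolding minimal_optimal_spanning_set_def
    by (intro optimal_spanning_set_affine_hull polytope_imp_compact polytope_imp_convex assms(1))
      blast
  then have "aff_dim B = int DIM('a)"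
    using assms(2) by (metis aff_dim_affine_hull)
  then have "card B = DIM('a) + 1"
    using aff_dim_affine_independent[OF indep] by simp
  with indep span show ?thesis
    by blast
qed

end
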